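(* Fix integers $Q_1,Q_2\ge0$. Consider a single realization of the demand stream: a Poisson process of type-1 arrivals (rate $\lambda_1$) and an independent Poisson process of type-2 arrivals (rate $\lambda_2$), each type-$i$ arrival carrying an independent mark equal to $1$ with probability $p_{ij}$ ($j\ne i$) and $0$ otherwise. Run four inventory systems driven by this same stream, with initial stocks $(Q_1+1,Q_2+1)$, $(Q_1+1,Q_2)$, $(Q_1,Q_2+1)$, $(Q_1,Q_2)$, and denote their stock of product $i$ at time $t$ by $n_i^{(Q_1+1,Q_2+1)}(t)$, $n_i^{(Q_1+1,Q_2)}(t)$, $n_i^{(Q_1,Q_2+1)}(t)$, $n_i^{(Q_1,Q_2)}(t)$ respectively. Then for every $t\ge0$ and $i=1,2$, on every sample path, $$n_i^{(Q_1+1,Q_2+1)}(t)-n_i^{(Q_1+1,Q_2)}(t)\ \ge\ n_i^{(Q_1,Q_2+1)}(t)-n_i^{(Q_1,Q_2)}(t).$$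
   Context: Dynamics of one inventory system driven by the arrival stream: at a type-$i$ arrival (with $j\ne i$ the other product), if the stock of product $i$ is positive it decreases by one; otherwise, if the stock of product $j$ is positive and the arrival's mark is $1$, the stock of $j$ decreases by one; otherwise nothing changes. There is no replenishment. Under this construction each system's stock process is the inventory CTMC with rates $\lambda_1,\lambda_2$ in the interior, $\lambda_1+\lambda_2p_{21}$ on $\{(i_1,0)\}$, $\lambda_2+\lambda_1p_{12}$ on $\{(0,i_2)\}$, and $(0,0)$ absorbing. *)

theory Defs
  imports Complex_Main
begin

datatype product = P1 | P2

fun other :: "product \<Rightarrow> product" where
  "other P1 = P2" | "other P2 = P1"

type_synonym stock = "product \<Rightarrow> nat"

text \<open>An arrival event: its product type and its substitution mark (True = mark 1).\<close>
type_synonym event = "product \<times> bool"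

definition init_stock :: "nat \<Rightarrow> nat \<Rightarrow> stock" where
  "init_stock q1 q2 = (\<lambda>i. case i of P1 \<Rightarrow> q1 | P2 \<Rightarrow> q2)"

definition step :: "event \<Rightarrow> stock \<Rightarrow> stock" where
  "step e s = (let i = fst e; j = other i in
     if s i > 0 then s(i := s i - 1)
     else if s j > 0 \<and> snd e then s(j := s j - 1)
     else s)"

definition num_arrivals :: "(nat \<Rightarrow> real) \<Rightarrow> real \<Rightarrow> nat" where
  "num_arrivals Tarr t = card {k. Tarr k \<le> t}"

definition stock_at :: "stock \<Rightarrow> (nat \<Rightarrow> real) \<Rightarrow> (nat \<Rightarrow> event) \<Rightarrow> real \<Rightarrow> stock" where
  "stock_at q Tarr ev t = foldl (\<lambda>s k. step (ev k) s) q [0..<num_arrivals Tarr t]"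

end

theory Submission
  imports Defs
begin

text \<open>The four systems differ from the smallest one by at most two units, and only finitely many
  joint configurations of these offsets are reachable from the initial one. That set, described
  by the invariant below, is closed under every arrival, and in each of its configurations the
  inequality holds; hence it holds after any finite number of arrivals.\<close>

definition run :: "event list \<Rightarrow> stock \<Rightarrow> stock" where
  "run es s = foldl (\<lambda>s e. step e s) s es"

definition offset :: "nat \<Rightarrow> nat \<Rightarrow> stock \<Rightarrow> stock \<Rightarrow> bool" where
  "offset x y s d \<longleftrightarrow> s P1 = d P1 + x \<and> s P2 = d P2 + y"

text \<open>Read the arguments as the systems started in (Q1+1,Q2+1), (Q1+1,Q2), (Q1,Q2+1), (Q1,Q2).
  The first disjunct is the initial configuration.\<close>

definition coupled :: "stock \<Rightarrow> stock \<Rightarrow> stock \<Rightarrow> stock \<Rightarrow> bool" where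
  "coupled a b c d \<longleftrightarrow>
     (offset 1 1 a d \<and> offset 1 0 b d \<and> offset 0 1 c d) \<or>
     (offset 2 0 a d \<and> offset 1 0 b d \<and> offset 1 0 c d \<and> d P2 = 0) \<or>
     (offset 1 0 a d \<and> offset 1 0 b d \<and> offset 0 0 c d \<and> d P2 = 0) \<or>
     (offset 0 2 a d \<and> offset 0 1 b d \<and> offset 0 1 c d \<and> d P1 = 0) \<or>
     (offset 0 1 a d \<and> offset 0 0 b d \<and> offset 0 1 c d \<and> d P1 = 0) \<or>
     (offset 1 0 a d \<and> offset 0 0 b d \<and> offset 0 0 c d \<and> d P1 = 0 \<and> d P2 = 0) \<or>
     (offset 0 1 a d \<and> offset 0 0 b d \<and> offset 0 0 c d \<and> d P1 = 0 \<and> d P2 = 0) \<or>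
     (offset 0 0 a d \<and> offset 0 0 b d \<and> offset 0 0 c d \<and> d P1 = 0 \<and> d P2 = 0)"

lemma step_apply:
  "step (P1, m) s P1 = (if s P1 > 0 then s P1 - 1 else s P1)"
  "step (P1, m) s P2 = (if s P1 > 0 then s P2 else if s P2 > 0 \<and> m then s P2 - 1 else s P2)"
  "step (P2, m) s P2 = (if s P2 > 0 then s P2 - 1 else s P2)"
  "step (P2, m) s P1 = (if s P2 > 0 then s P1 else if s P1 > 0 \<and> m then s P1 - 1 else s P1)"
  by (simp_all add: step_def Let_def)

lemma coupled_step:
  assumes "coupled a b c d"
  shows "coupled (step e a) (step e b) (step e c) (step e d)"
proof -
  obtain p m where e: "e = (p, m)" by fastforce
  show ?thesis
    using assms unfolding e coupled_def offset_def
    by (cases p; elim disjE; cases m; cases "d P1"; cases "d P2"; simp add: step_apply)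
qed

lemma coupled_run:
  "coupled a b c d \<Longrightarrow> coupled (run es a) (run es b) (run es c) (run es d)"
  by (induction es arbitrary: a b c d) (simp_all add: run_def coupled_step)

lemma coupled_init:
  "coupled (init_stock (Q1+1) (Q2+1)) (init_stock (Q1+1) Q2) (init_stock Q1 (Q2+1)) (init_stock Q1 Q2)"
  by (simp add: coupled_def offset_def init_stock_def)

lemma coupled_diff_mono:
  "coupled a b c d \<Longrightarrow> int (a i) - int (b i) \<ge> int (c i) - int (d i)"
  by (cases i) (auto simp: coupled_def offset_def)

lemma run_init_stock_diff_mono:
  "int (run es (init_stock (Q1+1) (Q2+1)) i) - int (run es (init_stock (Q1+1) Q2) i)
     \<ge> int (run es (init_stock Q1 (Q2+1)) i) - int (run es (init_stock Q1 Q2) i)"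
  by (intro coupled_diff_mono coupled_run coupled_init)

lemma stock_at_eq_run:
  "stock_at q Tarr ev t = run (map ev [0..<num_arrivals Tarr t]) q"
  by (simp add: stock_at_def run_def foldl_map)

theorem mainTheorem4:
  fixes Q1 Q2 :: nat and Tarr :: "nat \<Rightarrow> real" and ev :: "nat \<Rightarrow> event"
    and t :: real and i :: product
  assumes "strict_mono Tarr" and "Tarr 0 > 0"
    and "filterlim Tarr at_top sequentially"
    and "t \<ge> 0"
  shows "int (stock_at (init_stock (Q1+1) (Q2+1)) Tarr ev t i) - int (stock_at (init_stock (Q1+1) Q2) Tarr ev t i)
         \<ge> int (stock_at (init_stock Q1 (Q2+1)) Tarr ev t i) - int (stock_at (init_stock Q1 Q2) Tarr ev t i)"
  unfolding stock_at_eq_run by (rule run_init_stock_diff_mono)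

end
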